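(* Let $1\le n\le m$ and, for each unit vector $\mathbf{k}\in S^2\subset\mathbb{R}^3$, let $Q(\mathbf{k})$ be a real $n\times m$ matrix and $R(\mathbf{k})$ a real $m\times n$ matrix, both depending smoothly on $\mathbf{k}$. Define the $(n+m)\times(n+m)$ matrix $$P(\mathbf{k})=\begin{pmatrix}0 & Q(\mathbf{k})\\ R(\mathbf{k}) & 0\end{pmatrix}$$ and the $n\times n$ matrix $M(\mathbf{k}):=Q(\mathbf{k})R(\mathbf{k})$. (a) Fix $\mathbf{k}$. If $M(\mathbf{k})$ is diagonalizable and all its eigenvalues $0<\mu_1<\mu_2<\dots<\mu_l$ are strictly positive, then $P(\mathbf{k})$ is diagonalizable and all its eigenvalues are real and belong to the set $\{0\}\cup\{\pm\sqrt{\mu_j}: j=1,\dots,l\}$. (b) Suppose there exists a family of real symmetric positive-definite $n\times n$ matrices $H_1(\mathbf{k})$, depending smoothly on $\mathbf{k}\in S^2$, such that for all $\mathbf{k}\in S^2$ the matrix $H_1(\mathbf{k})M(\mathbf{k})$ is symmetric (i.e. $H_1(\mathbf{k})M(\mathbf{k})=M(\mathbf{k})^TH_1(\mathbf{k})$) and positive definite. Then there exists a family of real symmetric positive-definite $(n+m)\times(n+m)$ matrices $H(\mathbf{k})$, depending smoothly on $\mathbf{k}\in S^2$, such that $H(\mathbf{k})P(\mathbf{k})=P(\mathbf{k})^TH(\mathbf{k})$ for all $\mathbf{k}\in S^2$ (so that $P$ is strongly hyperbolic in the sense defined in the context).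
   Context: A family of matrices $P(\mathbf{k})$, $\mathbf{k}\in S^2$, is called strongly hyperbolic if there exists a family of symmetric positive-definite matrices $H(\mathbf{k})$ depending smoothly on $\mathbf{k}\in S^2$ such that $H(\mathbf{k})P(\mathbf{k})=P(\mathbf{k})^TH(\mathbf{k})$ for all $\mathbf{k}\in S^2$; if $H$ can be chosen independent of $\mathbf{k}$, it is called symmetric hyperbolic. *)

theory Defs
  imports "HOL-Analysis.Analysis" "Jordan_Normal_Form.Jordan_Normal_Form"
begin

fun Ck_on :: "nat \<Rightarrow> 'a::euclidean_space set \<Rightarrow> ('a \<Rightarrow> real) \<Rightarrow> bool" where
  "Ck_on 0 U f = continuous_on U f"
| "Ck_on (Suc j) U f = (continuous_on U f \<and>
     (\<forall>b\<in>Basis. \<exists>g. (\<forall>x\<in>U. ((\<lambda>t. f (x + t *\<^sub>R b)) has_real_derivative g x) (at 0))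
                     \<and> Ck_on j U g))"

text \<open>f is smooth (C^infinity) on the set S: it is the restriction to S of a function that is
  C^infinity on an open neighbourhood of S (standard notion for a submanifold such as S^2).\<close>
definition smooth_on :: "'a::euclidean_space set \<Rightarrow> ('a \<Rightarrow> real) \<Rightarrow> bool" where
  "smooth_on S f = (\<exists>U g. open U \<and> S \<subseteq> U \<and> (\<forall>j. Ck_on j U g) \<and> (\<forall>x\<in>S. g x = f x))"

definition smooth_mat_on :: "'a::euclidean_space set \<Rightarrow> nat \<Rightarrow> nat \<Rightarrow> ('a \<Rightarrow> real mat) \<Rightarrow> bool" where
  "smooth_mat_on S r c A = ((\<forall>k\<in>S. A k \<in> carrier_mat r c) \<and>
     (\<forall>i<r. \<forall>j<c. smooth_on S (\<lambda>k. A k $$ (i,j))))"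

definition diagonalizable :: "'a::field mat \<Rightarrow> bool" where
  "diagonalizable A = (\<exists>B. similar_mat A B \<and> diagonal_mat B)"

definition symmetric_mat :: "'a mat \<Rightarrow> bool" where
  "symmetric_mat A = (transpose_mat A = A)"

definition pos_def_mat :: "nat \<Rightarrow> real mat \<Rightarrow> bool" where
  "pos_def_mat n A = (A \<in> carrier_mat n n \<and> symmetric_mat A \<and>
     (\<forall>v\<in>carrier_vec n. v \<noteq> 0\<^sub>v n \<longrightarrow> scalar_prod v (mult_mat_vec A v) > 0))"

definition block_P :: "nat \<Rightarrow> nat \<Rightarrow> 'a::zero mat \<Rightarrow> 'a mat \<Rightarrow> 'a mat" where
  "block_P n m Q R = four_block_mat (0\<^sub>m n n) Q R (0\<^sub>m m m)"

definition S2 :: "(real \<times> real \<times> real) set" where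
  "S2 = sphere 0 1"

end

theory Submission
  imports Defs "Jordan_Normal_Form.Jordan_Normal_Form_Uniqueness"
    "Jordan_Normal_Form.Jordan_Normal_Form_Existence"
begin

text \<open>
  (a) If P (u, v) = e (u, v) with e \<noteq> 0, then Q v = e u and R u = e v, so Q R u = e^2 u with
  u \<noteq> 0: e^2 is one of the positive eigenvalues \<mu> of M and e = \<plusminus>sqrt \<mu>. Over the complex
  numbers a matrix is diagonalizable iff ker (A - e)^2 = ker (A - e) for every e (Jordan normal
  form). If (a, b) = (P - e) (u, v) lies in ker (P - e), then (M - e^2) a = 0 and
  (M - e^2) u = 2 e a; as M is diagonalizable, (M - e^2)^2 u = 0 forces 2 e a = 0, hence
  a = b = 0, where invertibility of M settles the case e = 0.

  (b) Take H = diag (H1 M, Q^T H1 Q + \<Pi>^T \<Pi>) with \<Pi> = det M \<cdot> 1 - R (adj M) Q. Since \<Pi> R = 0,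
  the identity H P = P^T H reduces to the symmetry of H1 M, and the lower block is positive
  definite because Q b = 0 implies \<Pi> b = det M \<cdot> b with det M \<noteq> 0. Using the adjugate instead
  of M^-1 keeps every entry of H a polynomial in the entries of Q, R and H1, hence smooth.
\<close>

section \<open>Smooth functions and smooth matrix families\<close>

lemma Ck_on_subset: "Ck_on j U f \<Longrightarrow> V \<subseteq> U \<Longrightarrow> Ck_on j V f"
proof (induction j arbitrary: f)
  case 0
  then show ?case using continuous_on_subset by auto
next
  case (Suc j)
  have "\<exists>g. (\<forall>x\<in>V. ((\<lambda>t. f (x + t *\<^sub>R b)) has_real_derivative g x) (at 0)) \<and> Ck_on j V g"
    if "b \<in> Basis" for b
  proof -
    obtain g where "\<forall>x\<in>U. ((\<lambda>t. f (x + t *\<^sub>R b)) has_real_derivative g x) (at 0)" "Ck_on j U g"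
      using Suc.prems \<open>b \<in> Basis\<close> by auto
    then show ?thesis using Suc.IH Suc.prems(2) by blast
  qed
  then show ?case using Suc.prems continuous_on_subset by auto
qed

lemma Ck_on_SucD: "Ck_on (Suc j) U f \<Longrightarrow> Ck_on j U f"
  by (induction j arbitrary: f) (auto, blast)

lemma Ck_on_const: "Ck_on j U (\<lambda>x. c)"
  by (induction j arbitrary: c) (auto intro!: exI[of _ "\<lambda>x. 0"])

lemma Ck_on_add: "Ck_on j U f \<Longrightarrow> Ck_on j U g \<Longrightarrow> Ck_on j U (\<lambda>x. f x + g x)"
proof (induction j arbitrary: f g)
  case 0
  then show ?case by (auto intro: continuous_on_add)
next
  case (Suc j)
  show ?case
  proof (simp, intro conjI ballI)
    show "continuous_on U (\<lambda>x. f x + g x)" using Suc.prems by (auto intro: continuous_on_add)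
    fix b :: 'a assume b: "b \<in> Basis"
    obtain f' where f': "\<forall>x\<in>U. ((\<lambda>t. f (x + t *\<^sub>R b)) has_real_derivative f' x) (at 0)" "Ck_on j U f'"
      using Suc.prems(1) b by auto
    obtain g' where g': "\<forall>x\<in>U. ((\<lambda>t. g (x + t *\<^sub>R b)) has_real_derivative g' x) (at 0)" "Ck_on j U g'"
      using Suc.prems(2) b by auto
    show "\<exists>h. (\<forall>x\<in>U. ((\<lambda>t. f (x + t *\<^sub>R b) + g (x + t *\<^sub>R b)) has_real_derivative h x) (at 0))
        \<and> Ck_on j U h"
      by (rule exI[of _ "\<lambda>x. f' x + g' x"]) (use f' g' Suc.IH in \<open>auto intro: derivative_intros\<close>)
  qed
qed

lemma Ck_on_mult: "Ck_on j U f \<Longrightarrow> Ck_on j U g \<Longrightarrow> Ck_on j U (\<lambda>x. f x * g x)"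
proof (induction j arbitrary: f g)
  case 0
  then show ?case by (auto intro: continuous_on_mult)
next
  case (Suc j)
  show ?case
  proof (simp, intro conjI ballI)
    show "continuous_on U (\<lambda>x. f x * g x)" using Suc.prems by (auto intro: continuous_on_mult)
    fix b :: 'a assume b: "b \<in> Basis"
    obtain f' where f': "\<forall>x\<in>U. ((\<lambda>t. f (x + t *\<^sub>R b)) has_real_derivative f' x) (at 0)" "Ck_on j U f'"
      using Suc.prems(1) b by auto
    obtain g' where g': "\<forall>x\<in>U. ((\<lambda>t. g (x + t *\<^sub>R b)) has_real_derivative g' x) (at 0)" "Ck_on j U g'"
      using Suc.prems(2) b by auto
    have fj: "Ck_on j U f" "Ck_on j U g" using Suc.prems Ck_on_SucD by blast+
    have "Ck_on j U (\<lambda>x. f' x * g x + f x * g' x)"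
      by (rule Ck_on_add; rule Suc.IH) (use fj f' g' in auto)
    moreover have "\<forall>x\<in>U. ((\<lambda>t. f (x + t *\<^sub>R b) * g (x + t *\<^sub>R b)) has_real_derivative (f' x * g x + f x * g' x)) (at 0)"
    proof
      fix x assume x: "x \<in> U"
      have "((\<lambda>t. f (x + t *\<^sub>R b) * g (x + t *\<^sub>R b)) has_real_derivative
          (f' x * g (x + 0 *\<^sub>R b) + f' x * 0 + f (x + 0 *\<^sub>R b) * g' x)) (at 0)"
        using DERIV_mult'[OF f'(1)[rule_format, OF x] g'(1)[rule_format, OF x]] by (simp add: algebra_simps)
      then show "((\<lambda>t. f (x + t *\<^sub>R b) * g (x + t *\<^sub>R b)) has_real_derivative (f' x * g x + f x * g' x)) (at 0)"
        by simp
    qed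
    ultimately show "\<exists>h. (\<forall>x\<in>U. ((\<lambda>t. f (x + t *\<^sub>R b) * g (x + t *\<^sub>R b)) has_real_derivative h x) (at 0)) \<and> Ck_on j U h"
      by (intro exI[of _ "\<lambda>x. f' x * g x + f x * g' x"]) simp
  qed
qed

lemma smooth_on_const: "smooth_on S (\<lambda>x. c)"
  unfolding smooth_on_def by (intro exI[of _ UNIV] exI[of _ "\<lambda>x. c"]) (auto intro: Ck_on_const)

lemma smooth_on_cong: "smooth_on S f \<Longrightarrow> (\<And>x. x \<in> S \<Longrightarrow> f x = g x) \<Longrightarrow> smooth_on S g"
  unfolding smooth_on_def by metis

lemma smooth_on_binop:
  fixes f g :: "'a::euclidean_space \<Rightarrow> real"
  assumes "smooth_on S f" "smooth_on S g"
    and op: "\<And>j (U::'a set) f g. Ck_on j U f \<Longrightarrow> Ck_on j U g \<Longrightarrow> Ck_on j U (\<lambda>x. h (f x) (g x))"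
  shows "smooth_on S (\<lambda>x. h (f x) (g x))"
proof -
  obtain U1 f1 where 1: "open U1" "S \<subseteq> U1" "\<forall>j. Ck_on j U1 f1" "\<forall>x\<in>S. f1 x = f x"
    using assms(1) unfolding smooth_on_def by blast
  obtain U2 g1 where 2: "open U2" "S \<subseteq> U2" "\<forall>j. Ck_on j U2 g1" "\<forall>x\<in>S. g1 x = g x"
    using assms(2) unfolding smooth_on_def by blast
  have "Ck_on j (U1 \<inter> U2) (\<lambda>x. h (f1 x) (g1 x))" for j
    using 1 2 by (intro op) (auto intro: Ck_on_subset)
  then show ?thesis
    unfolding smooth_on_def using 1 2 by (intro exI[of _ "U1 \<inter> U2"] exI[of _ "\<lambda>x. h (f1 x) (g1 x)"]) auto
qed

lemma smooth_on_add: "smooth_on S f \<Longrightarrow> smooth_on S g \<Longrightarrow> smooth_on S (\<lambda>x. f x + g x)"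
  by (rule smooth_on_binop[where h = "(+)"]) (auto intro: Ck_on_add)

lemma smooth_on_mult: "smooth_on S f \<Longrightarrow> smooth_on S g \<Longrightarrow> smooth_on S (\<lambda>x. f x * g x)"
  by (rule smooth_on_binop[where h = "(*)"]) (auto intro: Ck_on_mult)

lemma smooth_on_diff:
  assumes "smooth_on S f" "smooth_on S g"
  shows "smooth_on S (\<lambda>x. f x - g x)"
proof (rule smooth_on_cong)
  show "smooth_on S (\<lambda>x. f x + (-1) * g x)"
    by (intro smooth_on_add smooth_on_mult smooth_on_const assms)
qed simp

lemma smooth_on_sum:
  "finite A \<Longrightarrow> (\<And>a. a \<in> A \<Longrightarrow> smooth_on S (f a)) \<Longrightarrow> smooth_on S (\<lambda>x. \<Sum>a\<in>A. f a x)"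
  by (induction A rule: finite_induct) (auto intro: smooth_on_add smooth_on_const)

lemma smooth_on_prod:
  "finite A \<Longrightarrow> (\<And>a. a \<in> A \<Longrightarrow> smooth_on S (f a)) \<Longrightarrow> smooth_on S (\<lambda>x. \<Prod>a\<in>A. f a x)"
  by (induction A rule: finite_induct) (auto intro: smooth_on_mult smooth_on_const)

lemma smooth_mat_on_carrier: "smooth_mat_on S r c A \<Longrightarrow> k \<in> S \<Longrightarrow> A k \<in> carrier_mat r c"
  unfolding smooth_mat_on_def by auto

lemma smooth_mat_on_dim:
  assumes "smooth_mat_on S r c A" "k \<in> S"
  shows "dim_row (A k) = r" "dim_col (A k) = c"
  using smooth_mat_on_carrier[OF assms] by auto

lemma smooth_mat_on_entry:
  "smooth_mat_on S r c A \<Longrightarrow> i < r \<Longrightarrow> j < c \<Longrightarrow> smooth_on S (\<lambda>k. A k $$ (i,j))"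
  unfolding smooth_mat_on_def by auto

lemma smooth_mat_onI:
  assumes "\<And>k. k \<in> S \<Longrightarrow> A k \<in> carrier_mat r c"
    and "\<And>i j. i < r \<Longrightarrow> j < c \<Longrightarrow> smooth_on S (f i j)"
    and "\<And>i j k. i < r \<Longrightarrow> j < c \<Longrightarrow> k \<in> S \<Longrightarrow> A k $$ (i,j) = f i j k"
  shows "smooth_mat_on S r c A"
  unfolding smooth_mat_on_def
  using assms(1) smooth_on_cong[OF assms(2) assms(3)[symmetric]] by blast

lemma smooth_mat_on_const: "smooth_mat_on S r c (\<lambda>k. A)" if "A \<in> carrier_mat r c"
  by (rule smooth_mat_onI[where f = "\<lambda>i j k. A $$ (i,j)"]) (use that in \<open>auto intro: smooth_on_const\<close>)

lemma smooth_mat_on_add: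
  assumes A: "smooth_mat_on S r c A" and B: "smooth_mat_on S r c B"
  shows "smooth_mat_on S r c (\<lambda>k. A k + B k)"
  by (rule smooth_mat_onI[where f = "\<lambda>i j k. A k $$ (i,j) + B k $$ (i,j)"])
    (use smooth_mat_on_carrier[OF A] smooth_mat_on_carrier[OF B] smooth_mat_on_dim[OF A] smooth_mat_on_dim[OF B] in
      \<open>auto intro!: smooth_on_add smooth_mat_on_entry[OF A] smooth_mat_on_entry[OF B]\<close>)

lemma smooth_mat_on_minus:
  assumes A: "smooth_mat_on S r c A" and B: "smooth_mat_on S r c B"
  shows "smooth_mat_on S r c (\<lambda>k. A k - B k)"
  by (rule smooth_mat_onI[where f = "\<lambda>i j k. A k $$ (i,j) - B k $$ (i,j)"])
    (use smooth_mat_on_carrier[OF A] smooth_mat_on_carrier[OF B] smooth_mat_on_dim[OF A] smooth_mat_on_dim[OF B] in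
      \<open>auto intro!: smooth_on_diff smooth_mat_on_entry[OF A] smooth_mat_on_entry[OF B]\<close>)

lemma smooth_mat_on_smult:
  assumes "smooth_on S a" and A: "smooth_mat_on S r c A"
  shows "smooth_mat_on S r c (\<lambda>k. a k \<cdot>\<^sub>m A k)"
  by (rule smooth_mat_onI[where f = "\<lambda>i j k. a k * A k $$ (i,j)"])
    (use assms smooth_mat_on_carrier[OF A] smooth_mat_on_dim[OF A] in \<open>auto intro!: smooth_on_mult smooth_mat_on_entry[OF A]\<close>)

lemma smooth_mat_on_mult:
  assumes A: "smooth_mat_on S r n A" and B: "smooth_mat_on S n c B"
  shows "smooth_mat_on S r c (\<lambda>k. A k * B k)"
  by (rule smooth_mat_onI[where f = "\<lambda>i j k. \<Sum>l\<in>{0..<n}. A k $$ (i,l) * B k $$ (l,j)"])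
    (use smooth_mat_on_carrier[OF A] smooth_mat_on_carrier[OF B] smooth_mat_on_dim[OF A] smooth_mat_on_dim[OF B] in
      \<open>auto intro!: smooth_on_sum smooth_on_mult smooth_mat_on_entry[OF A] smooth_mat_on_entry[OF B]
        simp: scalar_prod_def\<close>)

lemma smooth_mat_on_transpose:
  assumes A: "smooth_mat_on S r c A"
  shows "smooth_mat_on S c r (\<lambda>k. transpose_mat (A k))"
  by (rule smooth_mat_onI[where f = "\<lambda>i j k. A k $$ (j,i)"])
    (use smooth_mat_on_carrier[OF A] smooth_mat_on_dim[OF A] in \<open>auto intro!: smooth_mat_on_entry[OF A]\<close>)

lemma smooth_mat_on_four_block:
  assumes A: "smooth_mat_on S r1 c1 A" and B: "smooth_mat_on S r1 c2 B"
    and C: "smooth_mat_on S r2 c1 C" and D: "smooth_mat_on S r2 c2 D"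
  shows "smooth_mat_on S (r1 + r2) (c1 + c2) (\<lambda>k. four_block_mat (A k) (B k) (C k) (D k))"
proof (rule smooth_mat_onI[where f = "\<lambda>i j k. if i < r1
    then if j < c1 then A k $$ (i, j) else B k $$ (i, j - c1)
    else if j < c1 then C k $$ (i - r1, j) else D k $$ (i - r1, j - c1)"])
  fix i j assume "i < r1 + r2" "j < c1 + c2"
  then show "smooth_on S (\<lambda>k. if i < r1
    then if j < c1 then A k $$ (i, j) else B k $$ (i, j - c1)
    else if j < c1 then C k $$ (i - r1, j) else D k $$ (i - r1, j - c1))"
    by (cases "i < r1"; cases "j < c1"; simp)
      (auto intro!: smooth_mat_on_entry[OF A] smooth_mat_on_entry[OF B] smooth_mat_on_entry[OF C]
        smooth_mat_on_entry[OF D])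
next
  fix i j k assume "i < r1 + r2" "j < c1 + c2" "k \<in> S"
  then show "four_block_mat (A k) (B k) (C k) (D k) $$ (i, j) = (if i < r1
    then if j < c1 then A k $$ (i, j) else B k $$ (i, j - c1)
    else if j < c1 then C k $$ (i - r1, j) else D k $$ (i - r1, j - c1))"
    using smooth_mat_on_dim[OF A \<open>k \<in> S\<close>] smooth_mat_on_dim[OF D \<open>k \<in> S\<close>] by simp
qed (use smooth_mat_on_carrier[OF A] smooth_mat_on_carrier[OF D] in auto)

lemma smooth_on_det:
  assumes A: "smooth_mat_on S n n A"
  shows "smooth_on S (\<lambda>k. Determinant.det (A k))"
proof (rule smooth_on_cong)
  show "smooth_on S (\<lambda>k. \<Sum>p\<in>{p. p permutes {0..<n}}. of_int (sign p) * (\<Prod>i\<in>{0..<n}. A k $$ (i, p i)))"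
    by (intro smooth_on_sum smooth_on_mult smooth_on_const smooth_on_prod smooth_mat_on_entry[OF A])
      (auto simp: permutes_in_image finite_permutations)
  show "(\<Sum>p\<in>{p. p permutes {0..<n}}. of_int (sign p) * (\<Prod>i\<in>{0..<n}. A k $$ (i, p i)))
      = Determinant.det (A k)" if "k \<in> S" for k
    using smooth_mat_on_carrier[OF A that] by (auto simp: det_def)
qed

lemma smooth_mat_on_mat_delete:
  assumes A: "smooth_mat_on S n n A" and "i < n" "j < n"
  shows "smooth_mat_on S (n - 1) (n - 1) (\<lambda>k. mat_delete (A k) i j)"
  by (rule smooth_mat_onI[where
        f = "\<lambda>a b k. A k $$ (if a < i then a else Suc a, if b < j then b else Suc b)"])
    (use assms smooth_mat_on_dim[OF A] in \<open>auto intro!: smooth_mat_on_entry[OF A] simp: mat_delete_def\<close>)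

lemma smooth_mat_on_adj_mat:
  assumes A: "smooth_mat_on S n n A"
  shows "smooth_mat_on S n n (\<lambda>k. adj_mat (A k))"
  by (rule smooth_mat_onI[where f = "\<lambda>i j k. (- 1) ^ (j + i) * Determinant.det (mat_delete (A k) j i)"])
    (use smooth_mat_on_carrier[OF A] smooth_mat_on_dim[OF A] adj_mat(1) in
      \<open>auto intro!: smooth_on_mult smooth_on_const smooth_on_det smooth_mat_on_mat_delete[OF A]
        simp: adj_mat_def cofactor_def\<close>)

section \<open>Nondefective matrices\<close>

lemma mult_mat_vec_zero: "A \<in> carrier_mat r c \<Longrightarrow> A *\<^sub>v 0\<^sub>v c = 0\<^sub>v r"
  by (intro eq_vecI) auto

lemma zero_mat_mult_vec: "v \<in> carrier_vec c \<Longrightarrow> 0\<^sub>m r c *\<^sub>v v = 0\<^sub>v r"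
  by (intro eq_vecI) (auto simp: scalar_prod_def)

lemma smult_zero_vec: "(e::'a::mult_zero) \<cdot>\<^sub>v 0\<^sub>v n = 0\<^sub>v n"
  by (rule eq_vecI) auto

lemma smult_vec_eq_zero_iff:
  fixes v :: "'a::field vec"
  assumes "v \<in> carrier_vec n"
  shows "e \<cdot>\<^sub>v v = 0\<^sub>v n \<longleftrightarrow> e = 0 \<or> v = 0\<^sub>v n"
proof
  assume ev: "e \<cdot>\<^sub>v v = 0\<^sub>v n"
  show "e = 0 \<or> v = 0\<^sub>v n"
  proof (cases "e = 0")
    case False
    have "v = 0\<^sub>v n"
    proof (rule eq_vecI)
      fix i assume "i < dim_vec (0\<^sub>v n :: 'a vec)"
      then show "v $ i = 0\<^sub>v n $ i"
        using assms False arg_cong[OF ev, of "\<lambda>w. w $ i"] by simp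
    qed (use assms in auto)
    then show ?thesis ..
  qed simp
qed (use assms in auto)

lemma minus_vec_eq_zero_iff:
  fixes a :: "'a::group_add vec"
  assumes "a \<in> carrier_vec n" "b \<in> carrier_vec n"
  shows "a - b = 0\<^sub>v n \<longleftrightarrow> a = b"
proof
  assume ab: "a - b = 0\<^sub>v n"
  show "a = b"
  proof (rule eq_vecI)
    fix i assume "i < dim_vec b"
    then show "a $ i = b $ i" using assms arg_cong[OF ab, of "\<lambda>w. w $ i"] by simp
  qed (use assms in auto)
qed (use assms in auto)

lemma zero_vec_append: "(0\<^sub>v (n + m) :: 'a::zero vec) = 0\<^sub>v n @\<^sub>v 0\<^sub>v m"
  by (rule eq_vecI) auto

lemma smult_one_mat_mult_vec:
  assumes "v \<in> carrier_vec n"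
  shows "(k \<cdot>\<^sub>m 1\<^sub>m n) *\<^sub>v v = (k::'a::comm_ring_1) \<cdot>\<^sub>v v"
proof (rule eq_vecI)
  fix i assume "i < dim_vec (k \<cdot>\<^sub>v v)"
  then have i: "i < n" using assms by simp
  have "((k \<cdot>\<^sub>m 1\<^sub>m n) *\<^sub>v v) $ i = (\<Sum>j\<in>{0..<n}. k * (if j = i then 1 else 0) * v $ j)"
    using i assms by (simp add: scalar_prod_def)
  also have "\<dots> = (\<Sum>j\<in>{0..<n}. if j = i then k * v $ j else 0)" by (rule sum.cong) auto
  finally show "((k \<cdot>\<^sub>m 1\<^sub>m n) *\<^sub>v v) $ i = (k \<cdot>\<^sub>v v) $ i" using i assms by simp
qed (use assms in auto)

lemma char_matrix_mult_vec:
  assumes "A \<in> carrier_mat n n" "v \<in> carrier_vec n"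
  shows "char_matrix A e *\<^sub>v v = A *\<^sub>v v - e \<cdot>\<^sub>v v"
  unfolding char_matrix_def
  by (rule eq_vecI) (use assms in \<open>auto simp: add_scalar_prod_distrib[of _ n]\<close>)

lemma not_eigenvalue_char_matrix_kernel:
  assumes "A \<in> carrier_mat n n" "\<not> eigenvalue A e" "w \<in> carrier_vec n"
    and "char_matrix A e *\<^sub>v w = 0\<^sub>v n"
  shows "w = 0\<^sub>v n"
  using assms eigenvalue_char_matrix by blast

lemma diagonal_mat_mult_vec_index:
  assumes "D \<in> carrier_mat n n" "diagonal_mat D" "v \<in> carrier_vec n" "i < n"
  shows "(D *\<^sub>v v) $ i = D $$ (i, i) * v $ i"
proof -
  have "(D *\<^sub>v v) $ i = (\<Sum>j\<in>{0..<n}. D $$ (i, j) * v $ j)"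
    using assms by (simp add: scalar_prod_def)
  also have "\<dots> = (\<Sum>j\<in>{0..<n}. if j = i then D $$ (i, i) * v $ j else 0)"
    by (rule sum.cong) (use assms in \<open>auto simp: diagonal_mat_def\<close>)
  finally show ?thesis using assms(4) by simp
qed

lemma diagonal_mat_mult_vec_square_zero:
  fixes D :: "'a::idom mat"
  assumes D: "D \<in> carrier_mat n n" "diagonal_mat D" and x: "x \<in> carrier_vec n"
    and DDx: "D *\<^sub>v (D *\<^sub>v x) = 0\<^sub>v n"
  shows "D *\<^sub>v x = 0\<^sub>v n"
proof (rule eq_vecI)
  fix i assume "i < dim_vec (0\<^sub>v n :: 'a vec)"
  then have i: "i < n" by simp
  have Dx: "D *\<^sub>v x \<in> carrier_vec n" using D x by simp
  have "D $$ (i, i) * (D $$ (i, i) * x $ i) = 0"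
    using arg_cong[OF DDx, of "\<lambda>w. w $ i"] i
    unfolding diagonal_mat_mult_vec_index[OF D Dx i] diagonal_mat_mult_vec_index[OF D x i] by simp
  then show "(D *\<^sub>v x) $ i = 0\<^sub>v n $ i"
    unfolding diagonal_mat_mult_vec_index[OF D x i] using i by simp
qed (use D in auto)

definition nondefective :: "'a::field mat \<Rightarrow> bool" where
  "nondefective A \<longleftrightarrow> (\<forall>e x. x \<in> carrier_vec (dim_row A) \<longrightarrow>
     char_matrix A e *\<^sub>v (char_matrix A e *\<^sub>v x) = 0\<^sub>v (dim_row A) \<longrightarrow>
     char_matrix A e *\<^sub>v x = 0\<^sub>v (dim_row A))"

lemma nondefectiveD:
  assumes "nondefective A" "A \<in> carrier_mat n n" "x \<in> carrier_vec n"
    and "char_matrix A e *\<^sub>v (char_matrix A e *\<^sub>v x) = 0\<^sub>v n"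
  shows "char_matrix A e *\<^sub>v x = 0\<^sub>v n"
  using assms unfolding nondefective_def by auto

lemma diagonalizable_imp_nondefective:
  fixes A :: "'a::field mat"
  assumes A: "A \<in> carrier_mat n n" and "diagonalizable A"
  shows "nondefective A"
  unfolding nondefective_def
proof (intro allI impI)
  fix e x
  obtain D P P' where wit: "similar_mat_wit A D P P'" and "diagonal_mat D"
    using \<open>diagonalizable A\<close> unfolding diagonalizable_def similar_mat_def by blast
  define X Y where "X = char_matrix A e" and "Y = char_matrix D e"
  have X: "X \<in> carrier_mat n n" unfolding X_def using A by simp
  have "similar_mat_wit X Y P P'"
    unfolding X_def Y_def by (rule similar_mat_wit_char_matrix[OF wit])
  from similar_mat_witD2[OF X this]
  have Y: "Y \<in> carrier_mat n n" and P: "P \<in> carrier_mat n n" and P': "P' \<in> carrier_mat n n"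
    and "P' * P = 1\<^sub>m n" and XY: "X = P * Y * P'"
    by auto
  have "diagonal_mat Y"
    using \<open>diagonal_mat D\<close> similar_mat_witD2(5)[OF A wit] unfolding Y_def diagonal_mat_def char_matrix_def by auto
  have X_mult: "X *\<^sub>v w = P *\<^sub>v (Y *\<^sub>v (P' *\<^sub>v w))" if "w \<in> carrier_vec n" for w
    using that P Y P' unfolding XY by (simp add: assoc_mult_mat_vec[of _ n n _ n])
  have P'P: "P' *\<^sub>v (P *\<^sub>v w) = w" if "w \<in> carrier_vec n" for w
    using that P P' \<open>P' * P = 1\<^sub>m n\<close> by (simp flip: assoc_mult_mat_vec)
  assume "x \<in> carrier_vec (dim_row A)" and XXx: "X *\<^sub>v (X *\<^sub>v x) = 0\<^sub>v (dim_row A)"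
  then have x: "x \<in> carrier_vec n" and "X *\<^sub>v (X *\<^sub>v x) = 0\<^sub>v n"
    using A unfolding X_def by auto
  define y where "y = P' *\<^sub>v x"
  have y: "y \<in> carrier_vec n" using P' x unfolding y_def by simp
  have "P *\<^sub>v (Y *\<^sub>v (Y *\<^sub>v y)) = 0\<^sub>v n"
    using \<open>X *\<^sub>v (X *\<^sub>v x) = 0\<^sub>v n\<close> X_mult[OF x] X_mult y Y P P'P unfolding y_def by simp
  then have "Y *\<^sub>v (Y *\<^sub>v y) = 0\<^sub>v n"
    using P'P[of "Y *\<^sub>v (Y *\<^sub>v y)"] Y y P' by (simp add: mult_mat_vec_zero)
  then have "Y *\<^sub>v y = 0\<^sub>v n"
    by (rule diagonal_mat_mult_vec_square_zero[OF Y \<open>diagonal_mat Y\<close> y])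
  then show "char_matrix A e *\<^sub>v x = 0\<^sub>v (dim_row A)"
    using X_mult[OF x] P A unfolding X_def y_def by (simp add: mult_mat_vec_zero)
qed

lemma le_1_if_sum_list_min_eq:
  fixes xs :: "nat list"
  assumes "(\<Sum>k\<leftarrow>xs. min 2 k) = (\<Sum>k\<leftarrow>xs. min 1 k)" and "x \<in> set xs"
  shows "x \<le> 1"
  using assms
proof (induction xs)
  case (Cons y xs)
  have "(\<Sum>k\<leftarrow>xs. min 1 k) \<le> (\<Sum>k\<leftarrow>xs. min 2 k)" by (rule sum_list_mono) simp
  then have "min 2 y = min 1 y" "(\<Sum>k\<leftarrow>xs. min 2 k) = (\<Sum>k\<leftarrow>xs. min 1 k)"
    using Cons.prems(1) by auto
  then show ?case using Cons by auto
qed simp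

lemma diagonal_mat_jordan_matrix:
  "(\<And>k e. (k, e) \<in> set n_as \<Longrightarrow> k = 1) \<Longrightarrow> diagonal_mat (jordan_matrix n_as)"
proof (induction n_as)
  case Nil
  then show ?case by (simp add: diagonal_mat_def jordan_matrix_def)
next
  case (Cons ke n_as)
  obtain k e where ke: "ke = (k, e)" by force
  have "jordan_matrix (ke # n_as) = four_block_mat (jordan_block 1 e) (0\<^sub>m 1 (sum_list (map fst n_as)))
     (0\<^sub>m (sum_list (map fst n_as)) 1) (jordan_matrix n_as)"
    using Cons.prems[of k e] jordan_matrix_carrier[of n_as] unfolding ke jordan_matrix_def
    by (simp add: Let_def)
  moreover have "diagonal_mat (jordan_matrix n_as)" using Cons by auto
  ultimately show ?case
    using jordan_matrix_carrier[of n_as] unfolding diagonal_mat_def by auto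
qed

lemma nondefective_imp_diagonalizable:
  fixes A :: "complex mat"
  assumes A: "A \<in> carrier_mat n n" and "nondefective A"
  shows "diagonalizable A"
proof -
  obtain n_as where jnf: "jordan_nf A n_as"
    using char_poly_factorized[OF A] jordan_nf_exists[OF A] by blast
  have "k = 1" if "(k, e) \<in> set n_as" for k e
  proof -
    define X where "X = char_matrix A e"
    have X: "X \<in> carrier_mat n n" unfolding X_def using A by auto
    then have XX: "X * X \<in> carrier_mat n n" by auto
    have "mat_kernel (X * X) = mat_kernel X"
    proof (intro equalityI subsetI)
      fix x assume "x \<in> mat_kernel (X * X)"
      then have "x \<in> carrier_vec n" "X *\<^sub>v (X *\<^sub>v x) = 0\<^sub>v n"
        using mat_kernelD[OF XX] X by auto
      then show "x \<in> mat_kernel X"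
        using nondefectiveD[OF \<open>nondefective A\<close> A] mat_kernelI[OF X] unfolding X_def by blast
    next
      fix x assume "x \<in> mat_kernel X"
      then have "x \<in> carrier_vec n" "X *\<^sub>v x = 0\<^sub>v n" using mat_kernelD[OF X] by auto
      then show "x \<in> mat_kernel (X * X)"
        using mat_kernelI[OF XX] X by (simp add: mult_mat_vec_zero)
    qed
    then have "dim_gen_eigenspace A e 2 = dim_gen_eigenspace A e 1"
      unfolding dim_gen_eigenspace_def kernel_dim_def X_def[symmetric]
      using X by (simp add: numeral_2_eq_2)
    then have "(\<Sum>k\<leftarrow>map fst [(k, e')\<leftarrow>n_as . e' = e]. min 2 k)
        = (\<Sum>k\<leftarrow>map fst [(k, e')\<leftarrow>n_as . e' = e]. min 1 k)"
      unfolding dim_gen_eigenspace[OF jnf] by simp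
    moreover have "k \<in> set (map fst [(k, e')\<leftarrow>n_as . e' = e])" using that by force
    moreover have "k \<noteq> 0" using jnf that unfolding jordan_nf_def by force
    ultimately show "k = 1" using le_1_if_sum_list_min_eq by fastforce
  qed
  then have "diagonal_mat (jordan_matrix n_as)" by (rule diagonal_mat_jordan_matrix)
  then show ?thesis using jnf unfolding jordan_nf_def diagonalizable_def by auto
qed

section \<open>Spectrum of the block matrix\<close>

lemma block_P_carrier:
  "Q \<in> carrier_mat n m \<Longrightarrow> R \<in> carrier_mat m n \<Longrightarrow> block_P n m Q R \<in> carrier_mat (n + m) (n + m)"
  unfolding block_P_def by auto

lemma block_P_mult_vec:
  assumes Q: "Q \<in> carrier_mat n m" and R: "R \<in> carrier_mat m n"
    and u: "u \<in> carrier_vec n" and v: "v \<in> carrier_vec m"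
  shows "block_P n m Q R *\<^sub>v (u @\<^sub>v v) = (Q *\<^sub>v v) @\<^sub>v (R *\<^sub>v u)"
  unfolding block_P_def
  using four_block_mat_mult_vec[OF zero_carrier_mat Q R zero_carrier_mat u v] Q R u v
  by (simp add: zero_mat_mult_vec)

lemma map_mat_block_P:
  assumes "Q \<in> carrier_mat n m" "R \<in> carrier_mat m n" "f 0 = 0"
  shows "map_mat f (block_P n m Q R) = block_P n m (map_mat f Q) (map_mat f R)"
  unfolding block_P_def using assms by (intro eq_matI) auto

lemma char_matrix_block_P_mult_vec:
  fixes Q R :: "'a::field mat"
  assumes Q: "Q \<in> carrier_mat n m" and R: "R \<in> carrier_mat m n"
    and u: "u \<in> carrier_vec n" and v: "v \<in> carrier_vec m"
  shows "char_matrix (block_P n m Q R) e *\<^sub>v (u @\<^sub>v v) = (Q *\<^sub>v v - e \<cdot>\<^sub>v u) @\<^sub>v (R *\<^sub>v u - e \<cdot>\<^sub>v v)"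
  unfolding char_matrix_mult_vec[OF block_P_carrier[OF Q R] append_carrier_vec[OF u v]]
    block_P_mult_vec[OF assms]
  by (rule eq_vecI) (use Q R u v in auto)

lemma char_matrix_block_P_mult_vec_eq_0_iff:
  fixes Q R :: "'a::field mat"
  assumes Q: "Q \<in> carrier_mat n m" and R: "R \<in> carrier_mat m n"
    and u: "u \<in> carrier_vec n" and v: "v \<in> carrier_vec m"
  shows "char_matrix (block_P n m Q R) e *\<^sub>v (u @\<^sub>v v) = 0\<^sub>v (n + m)
    \<longleftrightarrow> Q *\<^sub>v v = e \<cdot>\<^sub>v u \<and> R *\<^sub>v u = e \<cdot>\<^sub>v v"
proof -
  have a: "Q *\<^sub>v v - e \<cdot>\<^sub>v u \<in> carrier_vec n" using Q u v by auto
  show ?thesis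
    unfolding char_matrix_block_P_mult_vec[OF Q R u v] zero_vec_append
    using append_vec_eq[OF a zero_carrier_vec] minus_vec_eq_zero_iff[of "Q *\<^sub>v v" n "e \<cdot>\<^sub>v u"]
      minus_vec_eq_zero_iff[of "R *\<^sub>v u" m "e \<cdot>\<^sub>v v"] Q R u v
    by auto
qed

lemma char_matrix_mult_square_mult_vec:
  fixes Q R :: "'a::field mat"
  assumes Q: "Q \<in> carrier_mat n m" and R: "R \<in> carrier_mat m n"
    and u: "u \<in> carrier_vec n" and v: "v \<in> carrier_vec m"
  shows "char_matrix (Q * R) (e^2) *\<^sub>v u = Q *\<^sub>v (R *\<^sub>v u - e \<cdot>\<^sub>v v) + e \<cdot>\<^sub>v (Q *\<^sub>v v - e \<cdot>\<^sub>v u)"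
  unfolding char_matrix_mult_vec[OF mult_carrier_mat[OF Q R] u] assoc_mult_mat_vec[OF Q R u]
    mult_minus_distrib_mat_vec[OF Q mult_mat_vec_carrier[OF R u] smult_carrier_vec[THEN iffD2, OF v]]
    mult_mat_vec[OF Q v]
  by (rule eq_vecI) (use Q R u v in \<open>auto simp: power2_eq_square algebra_simps\<close>)

lemma char_matrix_square_of_block_P_chain:
  fixes Q R :: "'a::field mat"
  assumes Q: "Q \<in> carrier_mat n m" and R: "R \<in> carrier_mat m n"
    and u: "u \<in> carrier_vec n" and v: "v \<in> carrier_vec m"
    and a_def: "a = Q *\<^sub>v v - e \<cdot>\<^sub>v u" and b_def: "b = R *\<^sub>v u - e \<cdot>\<^sub>v v"
    and Qb: "Q *\<^sub>v b = e \<cdot>\<^sub>v a" and Ra: "R *\<^sub>v a = e \<cdot>\<^sub>v b"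
  shows "char_matrix (Q * R) (e^2) *\<^sub>v a = 0\<^sub>v n"
    and "char_matrix (Q * R) (e^2) *\<^sub>v u = (2 * e) \<cdot>\<^sub>v a"
proof -
  have a: "a \<in> carrier_vec n" and b: "b \<in> carrier_vec m" unfolding a_def b_def using Q R u v by auto
  show "char_matrix (Q * R) (e^2) *\<^sub>v a = 0\<^sub>v n"
    unfolding char_matrix_mult_square_mult_vec[OF Q R a b] Qb Ra using Q a b
    by (simp add: mult_mat_vec_zero smult_zero_vec)
  show "char_matrix (Q * R) (e^2) *\<^sub>v u = (2 * e) \<cdot>\<^sub>v a"
    unfolding char_matrix_mult_square_mult_vec[OF Q R u v] b_def[symmetric] a_def[symmetric] Qb
    by (rule eq_vecI) (use a in \<open>auto simp: algebra_simps\<close>)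
qed

lemma eigenvalue_block_P_imp_eigenvalue_square:
  fixes Q R :: "'a::field mat"
  assumes Q: "Q \<in> carrier_mat n m" and R: "R \<in> carrier_mat m n"
    and "eigenvalue (block_P n m Q R) e" "e \<noteq> 0"
  shows "eigenvalue (Q * R) (e^2)"
proof -
  obtain x where x: "x \<in> carrier_vec (n + m)" "x \<noteq> 0\<^sub>v (n + m)"
    and Xx: "char_matrix (block_P n m Q R) e *\<^sub>v x = 0\<^sub>v (n + m)"
    using assms(3) eigenvalue_char_matrix[OF block_P_carrier[OF Q R]] by blast
  define u v where "u = vec_first x n" and "v = vec_last x m"
  have u: "u \<in> carrier_vec n" and v: "v \<in> carrier_vec m" and xuv: "x = u @\<^sub>v v"
    unfolding u_def v_def using x by auto
  have Qv: "Q *\<^sub>v v = e \<cdot>\<^sub>v u" and Ru: "R *\<^sub>v u = e \<cdot>\<^sub>v v"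
    using Xx char_matrix_block_P_mult_vec_eq_0_iff[OF Q R u v] unfolding xuv by auto
  then have "char_matrix (Q * R) (e^2) *\<^sub>v u = 0\<^sub>v n"
    unfolding char_matrix_mult_square_mult_vec[OF Q R u v] using Q u v
    by (simp add: mult_mat_vec_zero smult_zero_vec)
  moreover have "u \<noteq> 0\<^sub>v n"
  proof
    assume "u = 0\<^sub>v n"
    then have "e \<cdot>\<^sub>v v = 0\<^sub>v m" using Ru R by (simp add: mult_mat_vec_zero)
    then have "v = 0\<^sub>v m" using smult_vec_eq_zero_iff[OF v] \<open>e \<noteq> 0\<close> by blast
    then show False using x \<open>u = 0\<^sub>v n\<close> unfolding xuv zero_vec_append by simp
  qed
  ultimately show ?thesis
    using u eigenvalue_char_matrix[OF mult_carrier_mat[OF Q R]] by blast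
qed

lemma nondefective_block_P:
  fixes Q R :: "'a::field_char_0 mat"
  assumes Q: "Q \<in> carrier_mat n m" and R: "R \<in> carrier_mat m n"
    and "nondefective (Q * R)" and "\<not> eigenvalue (Q * R) 0"
  shows "nondefective (block_P n m Q R)"
  unfolding nondefective_def
proof (intro allI impI)
  fix e x
  let ?X = "char_matrix (block_P n m Q R) e" and ?C = "char_matrix (Q * R) (e^2)"
  have QR: "Q * R \<in> carrier_mat n n" using Q R by simp
  assume "x \<in> carrier_vec (dim_row (block_P n m Q R))"
    and "?X *\<^sub>v (?X *\<^sub>v x) = 0\<^sub>v (dim_row (block_P n m Q R))"
  then have x: "x \<in> carrier_vec (n + m)" and XXx: "?X *\<^sub>v (?X *\<^sub>v x) = 0\<^sub>v (n + m)"
    using block_P_carrier[OF Q R] by auto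
  define u v where "u = vec_first x n" and "v = vec_last x m"
  have u: "u \<in> carrier_vec n" and v: "v \<in> carrier_vec m" and xuv: "x = u @\<^sub>v v"
    unfolding u_def v_def using x by auto
  define a b where "a = Q *\<^sub>v v - e \<cdot>\<^sub>v u" and "b = R *\<^sub>v u - e \<cdot>\<^sub>v v"
  have a: "a \<in> carrier_vec n" and b: "b \<in> carrier_vec m" unfolding a_def b_def using Q R u v by auto
  have Xx: "?X *\<^sub>v x = a @\<^sub>v b"
    unfolding xuv a_def b_def by (rule char_matrix_block_P_mult_vec[OF Q R u v])
  have Qb: "Q *\<^sub>v b = e \<cdot>\<^sub>v a" and Ra: "R *\<^sub>v a = e \<cdot>\<^sub>v b"
    using XXx char_matrix_block_P_mult_vec_eq_0_iff[OF Q R a b] unfolding Xx by blast+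
  have Ca: "?C *\<^sub>v a = 0\<^sub>v n" and Cu: "?C *\<^sub>v u = (2 * e) \<cdot>\<^sub>v a"
    using char_matrix_square_of_block_P_chain[OF Q R u v a_def b_def Qb Ra] by auto
  have "?C *\<^sub>v (?C *\<^sub>v u) = 0\<^sub>v n"
    unfolding Cu mult_mat_vec[OF char_matrix_closed[OF QR] a] Ca by (rule smult_zero_vec)
  then have "?C *\<^sub>v u = 0\<^sub>v n"
    using nondefectiveD[OF \<open>nondefective (Q * R)\<close> QR u] by blast
  have "a = 0\<^sub>v n \<and> b = 0\<^sub>v m"
  proof (cases "e = 0")
    case True
    then have "a = 0\<^sub>v n" and "u = 0\<^sub>v n"
      using Ca \<open>?C *\<^sub>v u = 0\<^sub>v n\<close> not_eigenvalue_char_matrix_kernel[OF QR \<open>\<not> eigenvalue (Q * R) 0\<close>] a u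
      by auto
    moreover have "b = 0\<^sub>v m"
      unfolding b_def using True \<open>u = 0\<^sub>v n\<close> R v by (intro eq_vecI) auto
    ultimately show ?thesis by simp
  next
    case False
    then have "a = 0\<^sub>v n" using Cu \<open>?C *\<^sub>v u = 0\<^sub>v n\<close> smult_vec_eq_zero_iff[OF a, of "2 * e"] by simp
    then have "e \<cdot>\<^sub>v b = 0\<^sub>v m" using Ra R by (simp add: mult_mat_vec_zero smult_zero_vec)
    then show ?thesis using \<open>a = 0\<^sub>v n\<close> False smult_vec_eq_zero_iff[OF b] by blast
  qed
  then show "?X *\<^sub>v x = 0\<^sub>v (dim_row (block_P n m Q R))"
    unfolding Xx using block_P_carrier[OF Q R] zero_vec_append by auto
qed

lemma complex_real_if_square_pos_real:
  fixes z :: complex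
  assumes "z^2 \<in> \<real>" "Re (z^2) > 0"
  shows "z \<in> \<real> \<and> (Re z = sqrt (Re (z^2)) \<or> Re z = - sqrt (Re (z^2)))"
proof -
  have "Im (z^2) = 2 * Re z * Im z" and re: "Re (z^2) = (Re z)^2 - (Im z)^2"
    by (simp_all add: power2_eq_square)
  moreover have "Im (z^2) = 0" using assms(1) by (simp add: complex_is_Real_iff)
  moreover have "Re z \<noteq> 0" using assms(2) re by (auto simp: power2_eq_square)
  ultimately have "Im z = 0" by simp
  then show ?thesis using re by (auto simp: complex_is_Real_iff abs_if)
qed

lemma diagonalizable_block_P:
  fixes Q R :: "complex mat"
  assumes Q: "Q \<in> carrier_mat n m" and R: "R \<in> carrier_mat m n"
    and "diagonalizable (Q * R)" and "\<not> eigenvalue (Q * R) 0"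
  shows "diagonalizable (block_P n m Q R)"
proof (rule nondefective_imp_diagonalizable[OF block_P_carrier[OF Q R]])
  have "nondefective (Q * R)"
    by (rule diagonalizable_imp_nondefective[OF mult_carrier_mat[OF Q R] \<open>diagonalizable (Q * R)\<close>])
  then show "nondefective (block_P n m Q R)"
    using nondefective_block_P[OF Q R] \<open>\<not> eigenvalue (Q * R) 0\<close> by blast
qed

lemma eigenvalue_block_P_real:
  fixes Q R :: "complex mat"
  assumes Q: "Q \<in> carrier_mat n m" and R: "R \<in> carrier_mat m n"
    and pos: "\<forall>\<mu>. eigenvalue (Q * R) \<mu> \<longrightarrow> \<mu> \<in> \<real> \<and> Re \<mu> > 0"
    and "eigenvalue (block_P n m Q R) e"
  shows "e \<in> \<real> \<and> (Re e = 0 \<or> (\<exists>\<mu>. eigenvalue (Q * R) (complex_of_real \<mu>)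
                                   \<and> (Re e = sqrt \<mu> \<or> Re e = - sqrt \<mu>)))"
proof (cases "e = 0")
  case False
  then have "eigenvalue (Q * R) (e^2)"
    using eigenvalue_block_P_imp_eigenvalue_square[OF Q R] assms(4) by blast
  moreover from this have real: "e^2 \<in> \<real>" "Re (e^2) > 0" using pos by auto
  moreover from real have "complex_of_real (Re (e^2)) = e^2"
    by (simp add: complex_is_Real_iff complex_eq_iff)
  ultimately have "eigenvalue (Q * R) (complex_of_real (Re (e^2)))" by simp
  then show ?thesis using complex_real_if_square_pos_real[OF real] by blast
qed simp

section \<open>A smooth symmetrizer\<close>

lemma quadratic_form_congruence:
  fixes X Y :: "'a::comm_ring_1 mat"
  assumes X: "X \<in> carrier_mat r c" and Y: "Y \<in> carrier_mat r r" and b: "b \<in> carrier_vec c"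
  shows "b \<bullet> ((transpose_mat X * Y * X) *\<^sub>v b) = (X *\<^sub>v b) \<bullet> (Y *\<^sub>v (X *\<^sub>v b))"
proof -
  have "b \<bullet> ((transpose_mat X * Y * X) *\<^sub>v b) = b \<bullet> (transpose_mat X *\<^sub>v (Y *\<^sub>v (X *\<^sub>v b)))"
    using X Y b by (simp add: assoc_mult_mat_vec[of _ c r _ c])
  also have "\<dots> = (transpose_mat X *\<^sub>v (Y *\<^sub>v (X *\<^sub>v b))) \<bullet> b"
    using X Y b by (intro comm_scalar_prod[of _ c]) auto
  also have "\<dots> = (Y *\<^sub>v (X *\<^sub>v b)) \<bullet> (X *\<^sub>v b)"
    using X Y b by (intro transpose_vec_mult_scalar) auto
  also have "\<dots> = (X *\<^sub>v b) \<bullet> (Y *\<^sub>v (X *\<^sub>v b))"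
    using X Y b by (intro comm_scalar_prod[of _ r]) auto
  finally show ?thesis .
qed

lemma quadratic_form_gram:
  fixes X :: "'a::comm_ring_1 mat"
  assumes X: "X \<in> carrier_mat r c" and b: "b \<in> carrier_vec c"
  shows "b \<bullet> ((transpose_mat X * X) *\<^sub>v b) = (X *\<^sub>v b) \<bullet> (X *\<^sub>v b)"
  using quadratic_form_congruence[OF X one_carrier_mat b] X b by simp

lemma scalar_prod_self_eq_0_iff:
  fixes v :: "real vec"
  assumes "v \<in> carrier_vec n"
  shows "v \<bullet> v = 0 \<longleftrightarrow> v = 0\<^sub>v n"
  using conjugate_square_eq_0_vec[OF assms] by simp

lemma scalar_prod_self_nonneg: "(v :: real vec) \<bullet> v \<ge> 0"
  using conjugate_square_ge_0_vec[of v] by simp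

lemma pos_def_matD:
  assumes "pos_def_mat n A"
  shows "A \<in> carrier_mat n n" and "transpose_mat A = A"
    and "v \<in> carrier_vec n \<Longrightarrow> v \<noteq> 0\<^sub>v n \<Longrightarrow> v \<bullet> (A *\<^sub>v v) > 0"
  using assms unfolding pos_def_mat_def symmetric_mat_def by auto

lemma pos_def_mat_nonneg:
  assumes "pos_def_mat n A" "v \<in> carrier_vec n"
  shows "v \<bullet> (A *\<^sub>v v) \<ge> 0"
  using assms pos_def_matD[OF assms(1)]
  by (cases "v = 0\<^sub>v n") (auto simp: mult_mat_vec_zero less_imp_le)

lemma pos_def_mat_det_nonzero:
  assumes "pos_def_mat n A"
  shows "Determinant.det A \<noteq> 0"
  using det_0_iff_vec_prod_zero[OF pos_def_matD(1)[OF assms]] pos_def_matD(3)[OF assms] by force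

lemma quadratic_form_congruence_add_gram:
  fixes Q H P :: "'a::comm_ring_1 mat"
  assumes Q: "Q \<in> carrier_mat n m" and H: "H \<in> carrier_mat n n" and P: "P \<in> carrier_mat m m"
    and b: "b \<in> carrier_vec m"
  shows "b \<bullet> ((transpose_mat Q * H * Q + transpose_mat P * P) *\<^sub>v b)
    = (Q *\<^sub>v b) \<bullet> (H *\<^sub>v (Q *\<^sub>v b)) + (P *\<^sub>v b) \<bullet> (P *\<^sub>v b)"
proof -
  have QHQ: "transpose_mat Q * H * Q \<in> carrier_mat m m" and PP: "transpose_mat P * P \<in> carrier_mat m m"
    using Q H P by auto
  have "b \<bullet> ((transpose_mat Q * H * Q + transpose_mat P * P) *\<^sub>v b)
      = b \<bullet> ((transpose_mat Q * H * Q) *\<^sub>v b + (transpose_mat P * P) *\<^sub>v b)"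
    by (simp only: add_mult_distrib_mat_vec[OF QHQ PP b])
  also have "\<dots> = b \<bullet> ((transpose_mat Q * H * Q) *\<^sub>v b) + b \<bullet> ((transpose_mat P * P) *\<^sub>v b)"
    by (rule scalar_prod_add_distrib[OF b mult_mat_vec_carrier[OF QHQ b] mult_mat_vec_carrier[OF PP b]])
  finally show ?thesis
    unfolding quadratic_form_congruence[OF Q H b] quadratic_form_gram[OF P b] .
qed

lemma transpose_congruence_add_gram:
  fixes H Q P :: "'a::comm_ring_1 mat"
  assumes H: "H \<in> carrier_mat n n" and Hsym: "transpose_mat H = H"
    and Q: "Q \<in> carrier_mat n m" and P: "P \<in> carrier_mat m m"
  shows "transpose_mat (transpose_mat Q * H * Q + transpose_mat P * P)
    = transpose_mat Q * H * Q + transpose_mat P * P"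
proof -
  have "transpose_mat (transpose_mat Q * H * Q) = transpose_mat Q * transpose_mat (transpose_mat Q * H)"
    using Q H by (intro transpose_mult) auto
  also have "transpose_mat (transpose_mat Q * H) = H * Q"
    using Q H Hsym by (subst transpose_mult[of _ m n]) auto
  also have "transpose_mat Q * (H * Q) = transpose_mat Q * H * Q"
    using Q H by (intro assoc_mult_mat[symmetric]) auto
  finally have "transpose_mat (transpose_mat Q * H * Q) = transpose_mat Q * H * Q" .
  moreover have "transpose_mat (transpose_mat P * P) = transpose_mat P * P"
    using P by (simp add: transpose_mult[of _ m m _ m])
  ultimately show ?thesis
    using Q H P by (simp add: transpose_add[of _ m m])
qed

lemma pos_def_mat_congruence_add_gram:
  assumes H: "pos_def_mat n H" and Q: "Q \<in> carrier_mat n m" and P: "P \<in> carrier_mat m m"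
    and ker: "\<And>b. b \<in> carrier_vec m \<Longrightarrow> Q *\<^sub>v b = 0\<^sub>v n \<Longrightarrow> P *\<^sub>v b = 0\<^sub>v m \<Longrightarrow> b = 0\<^sub>v m"
  shows "pos_def_mat m (transpose_mat Q * H * Q + transpose_mat P * P)"
  unfolding pos_def_mat_def symmetric_mat_def
proof (intro conjI ballI impI)
  have H': "H \<in> carrier_mat n n" and Hsym: "transpose_mat H = H" using pos_def_matD[OF H] by auto
  show "transpose_mat Q * H * Q + transpose_mat P * P \<in> carrier_mat m m" using Q H' P by auto
  show "transpose_mat (transpose_mat Q * H * Q + transpose_mat P * P)
      = transpose_mat Q * H * Q + transpose_mat P * P"
    by (rule transpose_congruence_add_gram[OF H' Hsym Q P])
  fix b :: "real vec" assume b: "b \<in> carrier_vec m" and "b \<noteq> 0\<^sub>v m"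
  have "b \<bullet> ((transpose_mat Q * H * Q + transpose_mat P * P) *\<^sub>v b)
      = (Q *\<^sub>v b) \<bullet> (H *\<^sub>v (Q *\<^sub>v b)) + (P *\<^sub>v b) \<bullet> (P *\<^sub>v b)"
    by (rule quadratic_form_congruence_add_gram[OF Q H' P b])
  moreover have "(Q *\<^sub>v b) \<bullet> (H *\<^sub>v (Q *\<^sub>v b)) \<ge> 0"
    using pos_def_mat_nonneg[OF H] Q b by simp
  moreover have "Q *\<^sub>v b \<noteq> 0\<^sub>v n \<or> P *\<^sub>v b \<noteq> 0\<^sub>v m" using ker b \<open>b \<noteq> 0\<^sub>v m\<close> by blast
  then have "(Q *\<^sub>v b) \<bullet> (H *\<^sub>v (Q *\<^sub>v b)) > 0 \<or> (P *\<^sub>v b) \<bullet> (P *\<^sub>v b) > 0"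
    using pos_def_matD(3)[OF H] scalar_prod_self_eq_0_iff scalar_prod_self_nonneg Q P b
    by (metis less_eq_real_def mult_mat_vec_carrier)
  ultimately show "b \<bullet> ((transpose_mat Q * H * Q + transpose_mat P * P) *\<^sub>v b) > 0"
    using scalar_prod_self_nonneg[of "P *\<^sub>v b"] by linarith
qed

lemma pos_def_mat_four_block_diag:
  assumes A: "pos_def_mat n A" and B: "pos_def_mat m B"
  shows "pos_def_mat (n + m) (four_block_mat A (0\<^sub>m n m) (0\<^sub>m m n) B)"
  unfolding pos_def_mat_def symmetric_mat_def
proof (intro conjI ballI impI)
  have A': "A \<in> carrier_mat n n" and B': "B \<in> carrier_mat m m"
    using pos_def_matD(1) A B by auto
  show "four_block_mat A (0\<^sub>m n m) (0\<^sub>m m n) B \<in> carrier_mat (n + m) (n + m)" using A' B' by auto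
  show "transpose_mat (four_block_mat A (0\<^sub>m n m) (0\<^sub>m m n) B) = four_block_mat A (0\<^sub>m n m) (0\<^sub>m m n) B"
    using A' B' pos_def_matD(2) A B by (simp add: transpose_four_block_mat[of _ n n _ m _ m])
  fix v :: "real vec" assume v: "v \<in> carrier_vec (n + m)" and "v \<noteq> 0\<^sub>v (n + m)"
  define a b where "a = vec_first v n" and "b = vec_last v m"
  have a: "a \<in> carrier_vec n" and b: "b \<in> carrier_vec m" and vab: "v = a @\<^sub>v b"
    unfolding a_def b_def using v by auto
  have "four_block_mat A (0\<^sub>m n m) (0\<^sub>m m n) B *\<^sub>v v = (A *\<^sub>v a) @\<^sub>v (B *\<^sub>v b)"
    unfolding vab using A' B' a b by (simp add: four_block_mat_mult_vec[of _ n n _ m _ m] zero_mat_mult_vec)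
  then have "v \<bullet> (four_block_mat A (0\<^sub>m n m) (0\<^sub>m m n) B *\<^sub>v v) = a \<bullet> (A *\<^sub>v a) + b \<bullet> (B *\<^sub>v b)"
    unfolding vab using A' B' a b by (simp add: scalar_prod_append[of _ n _ m])
  moreover have "a \<noteq> 0\<^sub>v n \<or> b \<noteq> 0\<^sub>v m"
    using \<open>v \<noteq> 0\<^sub>v (n + m)\<close> vab by auto
  ultimately show "v \<bullet> (four_block_mat A (0\<^sub>m n m) (0\<^sub>m m n) B *\<^sub>v v) > 0"
    using pos_def_matD(3)[OF A a] pos_def_matD(3)[OF B b] pos_def_mat_nonneg[OF A a]
      pos_def_mat_nonneg[OF B b] by fastforce
qed

text \<open>det (Q R) times the projection 1 - R (Q R)^-1 Q onto ker Q along the range of R.\<close>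

definition adj_projection :: "nat \<Rightarrow> 'a::comm_ring_1 mat \<Rightarrow> 'a mat \<Rightarrow> 'a mat" where
  "adj_projection m Q R = Determinant.det (Q * R) \<cdot>\<^sub>m 1\<^sub>m m - R * adj_mat (Q * R) * Q"

lemma adj_projection_carrier:
  "Q \<in> carrier_mat n m \<Longrightarrow> R \<in> carrier_mat m n \<Longrightarrow> adj_projection m Q R \<in> carrier_mat m m"
  unfolding adj_projection_def using adj_mat(1)[of "Q * R" n] by auto

lemma adj_projection_mult:
  assumes Q: "Q \<in> carrier_mat n m" and R: "R \<in> carrier_mat m n"
  shows "adj_projection m Q R * R = 0\<^sub>m m n"
proof -
  define d Ad where "d = Determinant.det (Q * R)" and "Ad = adj_mat (Q * R)"
  have QR: "Q * R \<in> carrier_mat n n" using Q R by simp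
  have Ad: "Ad \<in> carrier_mat n n" and AdQR: "Ad * (Q * R) = d \<cdot>\<^sub>m 1\<^sub>m n"
    unfolding Ad_def d_def using adj_mat[OF QR] by auto
  have "R * Ad * Q * R = (R * Ad) * (Q * R)" by (rule assoc_mult_mat) (use R Ad Q in auto)
  also have "\<dots> = R * (Ad * (Q * R))" by (rule assoc_mult_mat) (use R Ad Q in auto)
  also have "\<dots> = d \<cdot>\<^sub>m R" unfolding AdQR using R by (simp add: mult_smult_distrib[OF R one_carrier_mat])
  finally have "R * Ad * Q * R = d \<cdot>\<^sub>m R" .
  moreover have "(d \<cdot>\<^sub>m 1\<^sub>m m - R * Ad * Q) * R = d \<cdot>\<^sub>m 1\<^sub>m m * R - R * Ad * Q * R"
    using R Ad Q by (subst minus_mult_distrib_mat) auto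
  moreover have "d \<cdot>\<^sub>m 1\<^sub>m m * R = d \<cdot>\<^sub>m R"
    using mult_smult_assoc_mat[OF one_carrier_mat R] R by simp
  ultimately have "adj_projection m Q R * R = d \<cdot>\<^sub>m R - d \<cdot>\<^sub>m R"
    unfolding adj_projection_def d_def[symmetric] Ad_def[symmetric] by simp
  then show ?thesis using R by (simp add: minus_r_inv_mat)
qed

lemma adj_projection_mult_vec_ker:
  assumes Q: "Q \<in> carrier_mat n m" and R: "R \<in> carrier_mat m n"
    and b: "b \<in> carrier_vec m" and Qb: "Q *\<^sub>v b = 0\<^sub>v n"
  shows "adj_projection m Q R *\<^sub>v b = Determinant.det (Q * R) \<cdot>\<^sub>v b"
proof -
  have Ad: "adj_mat (Q * R) \<in> carrier_mat n n" using adj_mat(1)[OF mult_carrier_mat[OF Q R]] .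
  have "(R * adj_mat (Q * R) * Q) *\<^sub>v b = R *\<^sub>v (adj_mat (Q * R) *\<^sub>v (Q *\<^sub>v b))"
    using Ad Q R b by (simp add: assoc_mult_mat_vec[of _ m n _ m])
  also have "\<dots> = 0\<^sub>v m" unfolding Qb using Ad R by (simp add: mult_mat_vec_zero)
  finally have "(R * adj_mat (Q * R) * Q) *\<^sub>v b = 0\<^sub>v m" .
  moreover have "(Determinant.det (Q * R) \<cdot>\<^sub>m 1\<^sub>m m - R * adj_mat (Q * R) * Q) *\<^sub>v b
      = (Determinant.det (Q * R) \<cdot>\<^sub>m 1\<^sub>m m) *\<^sub>v b - (R * adj_mat (Q * R) * Q) *\<^sub>v b"
    by (rule minus_mult_distrib_mat_vec) (use Ad Q R b in auto)
  ultimately show ?thesis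
    unfolding adj_projection_def smult_one_mat_mult_vec[OF b] using b by simp
qed

lemma congruence_add_gram_mult:
  fixes Q R H P :: "'a::comm_ring_1 mat"
  assumes Q: "Q \<in> carrier_mat n m" and R: "R \<in> carrier_mat m n"
    and H: "H \<in> carrier_mat n n" and P: "P \<in> carrier_mat m m" and PR: "P * R = 0\<^sub>m m n"
  shows "(transpose_mat Q * H * Q + transpose_mat P * P) * R = transpose_mat Q * (H * (Q * R))"
proof -
  have "(transpose_mat Q * H * Q + transpose_mat P * P) * R
      = transpose_mat Q * H * Q * R + transpose_mat P * P * R"
    using Q H P R by (intro add_mult_distrib_mat) auto
  also have "transpose_mat P * P * R = 0\<^sub>m m n"
    using P R PR by (simp add: assoc_mult_mat[of _ m m _ m _ n] right_mult_zero_mat)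
  also have "transpose_mat Q * H * Q * R = transpose_mat Q * (H * (Q * R))"
    using Q H R by (simp add: assoc_mult_mat[of _ m n _ n _ m] assoc_mult_mat[of _ m n _ m _ n]
      assoc_mult_mat[of _ n n _ m _ n])
  finally show ?thesis using Q H R by simp
qed

lemma transpose_mult_congruence_add_gram:
  fixes Q R H P :: "'a::comm_ring_1 mat"
  assumes Q: "Q \<in> carrier_mat n m" and R: "R \<in> carrier_mat m n"
    and H: "H \<in> carrier_mat n n" and P: "P \<in> carrier_mat m m" and PR: "P * R = 0\<^sub>m m n"
  shows "transpose_mat R * (transpose_mat Q * H * Q + transpose_mat P * P) = transpose_mat (Q * R) * H * Q"
proof -
  have QT: "transpose_mat Q \<in> carrier_mat m n" and RT: "transpose_mat R \<in> carrier_mat n m"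
    and PT: "transpose_mat P \<in> carrier_mat m m" using Q R P by auto
  have "transpose_mat R * (transpose_mat Q * H * Q + transpose_mat P * P)
      = transpose_mat R * (transpose_mat Q * H * Q) + transpose_mat R * (transpose_mat P * P)"
    using QT H Q PT P RT by (intro mult_add_distrib_mat) auto
  also have "transpose_mat R * (transpose_mat P * P) = (transpose_mat R * transpose_mat P) * P"
    using RT PT P by (intro assoc_mult_mat[symmetric]) auto
  also have "transpose_mat R * transpose_mat P = 0\<^sub>m n m"
    using transpose_mult[OF P R] PR by simp
  also have "transpose_mat R * (transpose_mat Q * H * Q) = (transpose_mat R * transpose_mat Q) * H * Q"
    using RT QT H Q by (simp add: assoc_mult_mat[of _ n m _ n _ m] assoc_mult_mat[of _ n m _ n _ n]
      assoc_mult_mat[of _ n n _ n _ m])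
  also have "transpose_mat R * transpose_mat Q = transpose_mat (Q * R)"
    using transpose_mult[OF Q R] by simp
  finally show ?thesis
    using right_add_zero_mat[OF mult_carrier_mat[OF mult_carrier_mat[OF
        transpose_carrier_mat[THEN iffD2, OF mult_carrier_mat[OF Q R]] H] Q]] P by (simp add: left_mult_zero_mat)
qed

lemma four_block_diag_mult_block_P:
  assumes A: "A \<in> carrier_mat n n" and B: "B \<in> carrier_mat m m"
    and Q: "Q \<in> carrier_mat n m" and R: "R \<in> carrier_mat m n"
    and BR: "B * R = transpose_mat Q * A" and RB: "transpose_mat R * B = A * Q"
  shows "four_block_mat A (0\<^sub>m n m) (0\<^sub>m m n) B * block_P n m Q R
    = transpose_mat (block_P n m Q R) * four_block_mat A (0\<^sub>m n m) (0\<^sub>m m n) B"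
proof -
  have QT: "transpose_mat Q \<in> carrier_mat m n" and RT: "transpose_mat R \<in> carrier_mat n m"
    using Q R by auto
  have "four_block_mat A (0\<^sub>m n m) (0\<^sub>m m n) B * block_P n m Q R
      = four_block_mat (0\<^sub>m n n) (A * Q) (B * R) (0\<^sub>m m m)"
    unfolding block_P_def
    using mult_four_block_mat[OF A zero_carrier_mat zero_carrier_mat B zero_carrier_mat Q R zero_carrier_mat]
      A B Q R by (simp add: right_mult_zero_mat left_mult_zero_mat)
  moreover have "transpose_mat (block_P n m Q R) * four_block_mat A (0\<^sub>m n m) (0\<^sub>m m n) B
      = four_block_mat (0\<^sub>m n n) (transpose_mat R * B) (transpose_mat Q * A) (0\<^sub>m m m)"
    unfolding block_P_def transpose_four_block_mat[OF zero_carrier_mat Q R zero_carrier_mat]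
    using mult_four_block_mat[OF zero_carrier_mat RT QT zero_carrier_mat A zero_carrier_mat zero_carrier_mat B]
      A B QT RT by (simp add: right_mult_zero_mat left_mult_zero_mat)
  ultimately show ?thesis unfolding BR RB by simp
qed

definition block_symmetrizer :: "nat \<Rightarrow> nat \<Rightarrow> real mat \<Rightarrow> real mat \<Rightarrow> real mat \<Rightarrow> real mat" where
  "block_symmetrizer n m Q R H1 = four_block_mat (H1 * (Q * R)) (0\<^sub>m n m) (0\<^sub>m m n)
     (transpose_mat Q * H1 * Q + transpose_mat (adj_projection m Q R) * adj_projection m Q R)"

lemma block_symmetrizer:
  assumes Q: "Q \<in> carrier_mat n m" and R: "R \<in> carrier_mat m n"
    and H1: "pos_def_mat n H1" and comm: "H1 * (Q * R) = transpose_mat (Q * R) * H1"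
    and A: "pos_def_mat n (H1 * (Q * R))"
  shows "pos_def_mat (n + m) (block_symmetrizer n m Q R H1)"
    and "block_symmetrizer n m Q R H1 * block_P n m Q R
      = transpose_mat (block_P n m Q R) * block_symmetrizer n m Q R H1"
proof -
  let ?P = "adj_projection m Q R"
  have H1': "H1 \<in> carrier_mat n n" and QR: "Q * R \<in> carrier_mat n n"
    using pos_def_matD(1)[OF H1] Q R by auto
  have P: "?P \<in> carrier_mat m m" by (rule adj_projection_carrier[OF Q R])
  have PR: "?P * R = 0\<^sub>m m n" by (rule adj_projection_mult[OF Q R])
  have "Determinant.det (Q * R) \<noteq> 0"
    using pos_def_mat_det_nonzero[OF A] det_mult[OF H1' QR] by simp
  have B: "pos_def_mat m (transpose_mat Q * H1 * Q + transpose_mat ?P * ?P)"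
  proof (rule pos_def_mat_congruence_add_gram[OF H1 Q P])
    fix b assume b: "b \<in> carrier_vec m" and "Q *\<^sub>v b = 0\<^sub>v n" "?P *\<^sub>v b = 0\<^sub>v m"
    then show "b = 0\<^sub>v m"
      using adj_projection_mult_vec_ker[OF Q R b] smult_vec_eq_zero_iff[OF b]
        \<open>Determinant.det (Q * R) \<noteq> 0\<close> by simp
  qed
  show "pos_def_mat (n + m) (block_symmetrizer n m Q R H1)"
    unfolding block_symmetrizer_def by (rule pos_def_mat_four_block_diag[OF A B])
  have "transpose_mat (Q * R) * H1 * Q = H1 * (Q * R) * Q"
    unfolding comm ..
  then show "block_symmetrizer n m Q R H1 * block_P n m Q R
      = transpose_mat (block_P n m Q R) * block_symmetrizer n m Q R H1"
    unfolding block_symmetrizer_def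
    using congruence_add_gram_mult[OF Q R H1' P PR] transpose_mult_congruence_add_gram[OF Q R H1' P PR]
      pos_def_matD(1)[OF A] pos_def_matD(1)[OF B] Q R
    by (intro four_block_diag_mult_block_P) auto
qed

lemma smooth_mat_on_adj_projection:
  assumes Q: "smooth_mat_on S n m Q" and R: "smooth_mat_on S m n R"
  shows "smooth_mat_on S m m (\<lambda>k. adj_projection m (Q k) (R k))"
proof -
  have QR: "smooth_mat_on S n n (\<lambda>k. Q k * R k)" by (rule smooth_mat_on_mult[OF Q R])
  show ?thesis
    unfolding adj_projection_def
    by (rule smooth_mat_on_minus[OF smooth_mat_on_smult[OF smooth_on_det[OF QR] smooth_mat_on_const]
          smooth_mat_on_mult[OF smooth_mat_on_mult[OF R smooth_mat_on_adj_mat[OF QR]] Q]]) simp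
qed

lemma smooth_mat_on_block_symmetrizer:
  assumes Q: "smooth_mat_on S n m Q" and R: "smooth_mat_on S m n R" and H1: "smooth_mat_on S n n H1"
  shows "smooth_mat_on S (n + m) (n + m) (\<lambda>k. block_symmetrizer n m (Q k) (R k) (H1 k))"
proof -
  have P: "smooth_mat_on S m m (\<lambda>k. adj_projection m (Q k) (R k))"
    by (rule smooth_mat_on_adj_projection[OF Q R])
  show ?thesis
    unfolding block_symmetrizer_def
    by (rule smooth_mat_on_four_block[OF smooth_mat_on_mult[OF H1 smooth_mat_on_mult[OF Q R]]
          smooth_mat_on_const smooth_mat_on_const
          smooth_mat_on_add[OF smooth_mat_on_mult[OF smooth_mat_on_mult[OF smooth_mat_on_transpose[OF Q] H1] Q]
            smooth_mat_on_mult[OF smooth_mat_on_transpose[OF P] P]]]) simp_all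
qed

lemma block_P_diagonalizable_real_spectrum:
  fixes Q R :: "real mat"
  assumes Q: "Q \<in> carrier_mat n m" and R: "R \<in> carrier_mat m n"
    and M: "diagonalizable (map_mat complex_of_real (Q * R))"
      "\<forall>\<mu>. eigenvalue (map_mat complex_of_real (Q * R)) \<mu> \<longrightarrow> \<mu> \<in> \<real> \<and> Re \<mu> > 0"
  shows "diagonalizable (map_mat complex_of_real (block_P n m Q R)) \<and>
    (\<forall>e. eigenvalue (map_mat complex_of_real (block_P n m Q R)) e \<longrightarrow>
      e \<in> \<real> \<and> (Re e = 0 \<or> (\<exists>\<mu>. eigenvalue (map_mat complex_of_real (Q * R)) (complex_of_real \<mu>)
                               \<and> (Re e = sqrt \<mu> \<or> Re e = - sqrt \<mu>))))"
proof -
  have Qc: "map_mat complex_of_real Q \<in> carrier_mat n m" and Rc: "map_mat complex_of_real R \<in> carrier_mat m n"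
    using Q R by auto
  note QR = of_real_hom.mat_hom_mult[OF Q R]
  have P: "map_mat complex_of_real (block_P n m Q R)
      = block_P n m (map_mat complex_of_real Q) (map_mat complex_of_real R)"
    by (rule map_mat_block_P[OF Q R]) simp
  have "\<not> eigenvalue (map_mat complex_of_real (Q * R)) 0" using M(2) by auto
  then show ?thesis
    using diagonalizable_block_P[OF Qc Rc] eigenvalue_block_P_real[OF Qc Rc] M unfolding P QR by blast
qed

lemma block_P_strongly_hyperbolic:
  assumes Q: "smooth_mat_on S n m Q" and R: "smooth_mat_on S m n R" and H1: "smooth_mat_on S n n H1"
    and H1_sym: "\<forall>k\<in>S. pos_def_mat n (H1 k) \<and> H1 k * (Q k * R k) = transpose_mat (Q k * R k) * H1 k \<and>
      pos_def_mat n (H1 k * (Q k * R k))"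
  shows "\<exists>H. smooth_mat_on S (n + m) (n + m) H \<and>
    (\<forall>k\<in>S. pos_def_mat (n + m) (H k) \<and>
      H k * block_P n m (Q k) (R k) = transpose_mat (block_P n m (Q k) (R k)) * H k)"
proof (intro exI conjI ballI)
  show "smooth_mat_on S (n + m) (n + m) (\<lambda>k. block_symmetrizer n m (Q k) (R k) (H1 k))"
    by (rule smooth_mat_on_block_symmetrizer[OF Q R H1])
  fix k assume "k \<in> S"
  then have Qk: "Q k \<in> carrier_mat n m" and Rk: "R k \<in> carrier_mat m n"
    using smooth_mat_on_carrier Q R by blast+
  show "pos_def_mat (n + m) (block_symmetrizer n m (Q k) (R k) (H1 k))"
    and "block_symmetrizer n m (Q k) (R k) (H1 k) * block_P n m (Q k) (R k)
      = transpose_mat (block_P n m (Q k) (R k)) * block_symmetrizer n m (Q k) (R k) (H1 k)"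
    using block_symmetrizer[OF Qk Rk] H1_sym \<open>k \<in> S\<close> by blast+
qed

theorem lemma1:
  fixes n m :: nat and Q R :: "real \<times> real \<times> real \<Rightarrow> real mat"
  assumes "1 \<le> n" and "n \<le> m"
    and "smooth_mat_on S2 n m Q" and "smooth_mat_on S2 m n R"
  shows "(\<forall>k\<in>S2.
            diagonalizable (map_mat complex_of_real (Q k * R k)) \<and>
            (\<forall>\<mu>. eigenvalue (map_mat complex_of_real (Q k * R k)) \<mu> \<longrightarrow> \<mu> \<in> \<real> \<and> Re \<mu> > 0)
          \<longrightarrow> diagonalizable (map_mat complex_of_real (block_P n m (Q k) (R k))) \<and>
              (\<forall>ev. eigenvalue (map_mat complex_of_real (block_P n m (Q k) (R k))) ev \<longrightarrow>
                  ev \<in> \<real> \<and>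
                  (Re ev = 0 \<or> (\<exists>\<mu>. eigenvalue (map_mat complex_of_real (Q k * R k)) (complex_of_real \<mu>)
                                  \<and> (Re ev = sqrt \<mu> \<or> Re ev = - sqrt \<mu>)))))
       \<and> ((\<exists>H1. smooth_mat_on S2 n n H1 \<and>
              (\<forall>k\<in>S2. pos_def_mat n (H1 k) \<and>
                       H1 k * (Q k * R k) = transpose_mat (Q k * R k) * H1 k \<and>
                       pos_def_mat n (H1 k * (Q k * R k))))
          \<longrightarrow> (\<exists>H. smooth_mat_on S2 (n + m) (n + m) H \<and>
                 (\<forall>k\<in>S2. pos_def_mat (n + m) (H k) \<and>
                          H k * block_P n m (Q k) (R k) = transpose_mat (block_P n m (Q k) (R k)) * H k)))"
  using block_P_diagonalizable_real_spectrum smooth_mat_on_carrier[OF assms(3)]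
    smooth_mat_on_carrier[OF assms(4)] block_P_strongly_hyperbolic[OF assms(3,4)]
  by (intro conjI ballI impI) blast+

end
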